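(* Suppose $\Phi\ge6H^2\log(12|\mathcal S|^2|\mathcal A|/\delta)$ and $H\ge2$. On the event $\mathcal E^P$, for every $(s,a,s')\in\mathcal S\times\mathcal A\times\mathcal S$, $$\Big(1-\frac1H\Big)\widehat{\mathbb P}^\dagger(s'\mid s,a)\le\mathbb P^\dagger(s'\mid s,a)\le\Big(1+\frac1H\Big)\widehat{\mathbb P}^\dagger(s'\mid s,a).$$
   Context: Finite state space $\mathcal S$, finite action space $\mathcal A$, transition kernel $\mathbb P(\cdot\mid s,a)$ on $\mathcal S$, $\delta\in(0,1)$. An offline dataset of tuples $(s,a,s')$ with $s'\sim\mathbb P(\cdot\mid s,a)$ gives counts $N(s,a)$, $N(s,a,s')$. With an absorbing state $s^\dagger\notin\mathcal S$: $\mathbb P^\dagger(s'\mid s,a)=\mathbb P(s'\mid s,a)$ if $N(s,a,s')\ge\Phi$ and $0$ otherwise; $\widehat{\mathbb P}^\dagger(s'\mid s,a)=N(s,a,s')/N(s,a)$ if $N(s,a,s')\ge\Phi$ and $0$ otherwise (for $s'\in\mathcal S$). $\mathcal E^P$ is the event that for all $(s,a,s')$ with $N(s,a,s')\ge\Phi$, $|\widehat{\mathbb P}^\dagger(s'\mid s,a)-\mathbb P^\dagger(s'\mid s,a)|\le\sqrt{\frac{2\widehat{\mathbb P}^\dagger(s'\mid s,a)}{N(s,a)}\log\frac{12|\mathcal S|^2|\mathcal A|}{\delta}}+\frac{14}{3N(s,a)}\log\frac{12|\mathcal S|^2|\mathcal A|}{\delta}$. *)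

theory Defs
  imports "HOL-Probability.Probability"
begin

definition cnt3 :: "('s \<times> 'a \<times> 's) list \<Rightarrow> 's \<Rightarrow> 'a \<Rightarrow> 's \<Rightarrow> nat" where
  "cnt3 D s a s' = length (filter (\<lambda>x. x = (s, a, s')) D)"

definition cnt2 :: "('s \<times> 'a \<times> 's) list \<Rightarrow> 's \<Rightarrow> 'a \<Rightarrow> nat" where
  "cnt2 D s a = length (filter (\<lambda>(x, y, _). x = s \<and> y = a) D)"

definition Pdag :: "('s \<Rightarrow> 'a \<Rightarrow> 's pmf) \<Rightarrow> ('s \<times> 'a \<times> 's) list \<Rightarrow> real \<Rightarrow> 's \<Rightarrow> 'a \<Rightarrow> 's \<Rightarrow> real" where
  "Pdag P D \<Phi> s a s' = (if real (cnt3 D s a s') \<ge> \<Phi> then pmf (P s a) s' else 0)"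

definition Phat_dag :: "('s \<times> 'a \<times> 's) list \<Rightarrow> real \<Rightarrow> 's \<Rightarrow> 'a \<Rightarrow> 's \<Rightarrow> real" where
  "Phat_dag D \<Phi> s a s' = (if real (cnt3 D s a s') \<ge> \<Phi> then real (cnt3 D s a s') / real (cnt2 D s a) else 0)"

definition event_EP :: "('s::finite \<Rightarrow> 'a::finite \<Rightarrow> 's pmf) \<Rightarrow> ('s \<times> 'a \<times> 's) list \<Rightarrow> real \<Rightarrow> real \<Rightarrow> bool" where
  "event_EP P D \<Phi> \<delta> \<longleftrightarrow>
    (\<forall>s a s'. real (cnt3 D s a s') \<ge> \<Phi> \<longrightarrow>
       \<bar>Phat_dag D \<Phi> s a s' - Pdag P D \<Phi> s a s'\<bar>
       \<le> sqrt (2 * Phat_dag D \<Phi> s a s' / real (cnt2 D s a) * ln (12 * real CARD('s)^2 * real CARD('a) / \<delta>))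
          + 14 / (3 * real (cnt2 D s a)) * ln (12 * real CARD('s)^2 * real CARD('a) / \<delta>))"

end

theory Submission
  imports Defs
begin

text \<open>For a transition seen \<open>n \<ge> \<Phi>\<close> times among \<open>N\<close> visits of \<open>(s,a)\<close>, the empirical
  probability is \<open>n/N\<close> and the threshold gives \<open>L \<le> n/(6H\<^sup>2)\<close> for the logarithmic factor \<open>L\<close>.
  The confidence width of \<open>\<E>\<^sup>P\<close> is then at most \<open>(n/N)/H\<close>: the square-root term is
  \<open>sqrt(2nL)/N \<le> n/(sqrt 3 H N) \<le> (3/5) n/(HN)\<close> and, as \<open>H \<ge> 2\<close>, the linear term is
  \<open>14L/(3N) \<le> 7n/(9H\<^sup>2N) \<le> (2/5) n/(HN)\<close>. An absolute error of at most \<open>1/H\<close> times the empirical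
  probability is the claimed relative error; below the threshold both kernels vanish.\<close>

lemma sqrt_le_of_log_factor_small:
  fixes n L h :: real
  assumes "0 \<le> L" "0 < h" "6 * h\<^sup>2 * L \<le> n"
  shows "sqrt (2 * n * L) \<le> 3/5 * n / h"
proof (rule real_le_lsqrt)
  have "0 \<le> 6 * h\<^sup>2 * L" using assms by simp
  then have "0 \<le> n" using assms by linarith
  then show "0 \<le> 3/5 * n / h" using assms by simp
  have "2 * n * L * (3 * h\<^sup>2) \<le> n * n"
    using mult_left_mono[OF assms(3) \<open>0 \<le> n\<close>] by (simp add: algebra_simps)
  then have "2 * n * L \<le> n\<^sup>2 / (3 * h\<^sup>2)"
    using assms by (simp add: field_simps power2_eq_square)
  also have "\<dots> \<le> (3/5 * n / h)\<^sup>2"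
    using assms by (simp add: field_simps power2_eq_square)
  finally show "2 * n * L \<le> (3/5 * n / h)\<^sup>2" .
qed

lemma linear_le_of_log_factor_small:
  fixes n L h :: real
  assumes "0 \<le> L" "2 \<le> h" "6 * h\<^sup>2 * L \<le> n"
  shows "14/3 * L \<le> 2/5 * n / h"
proof -
  have "0 \<le> 6 * h\<^sup>2 * L" using assms by simp
  then have "0 \<le> n" using assms by linarith
  have "14/3 * L \<le> 7/9 * n / h / h"
    using assms by (simp add: field_simps power2_eq_square)
  also have "\<dots> \<le> 7/9 * n / h / 2"
    using assms \<open>0 \<le> n\<close> by (intro divide_left_mono) auto
  also have "\<dots> \<le> 2/5 * n / h"
    using assms \<open>0 \<le> n\<close> by (simp add: field_simps)
  finally show ?thesis .
qed

text \<open>No relation between \<open>n\<close> and \<open>N\<close> is needed: for \<open>N = 0\<close> both sides are \<open>0\<close> as \<open>x / 0 = 0\<close>.\<close>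

lemma bernstein_width_le_empirical_div:
  fixes n N L h :: real
  assumes "0 \<le> N" "0 \<le> L" "2 \<le> h" "6 * h\<^sup>2 * L \<le> n"
  shows "sqrt (2 * (n / N) / N * L) + 14 / (3 * N) * L \<le> (n / N) / h"
proof -
  have "sqrt (2 * (n / N) / N * L) + 14 / (3 * N) * L = (sqrt (2 * n * L) + 14/3 * L) / N"
    using assms(1) by (simp add: real_sqrt_divide power2_eq_square add_divide_distrib)
  also have "\<dots> \<le> (n / h) / N"
    using sqrt_le_of_log_factor_small[of L h n] linear_le_of_log_factor_small[of L h n] assms
    by (intro divide_right_mono) auto
  finally show ?thesis by (simp add: mult.commute)
qed

lemma relative_bounds_of_abs_diff_le:
  fixes p q h :: real
  assumes "\<bar>q - p\<bar> \<le> q / h"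
  shows "(1 - 1 / h) * q \<le> p \<and> p \<le> (1 + 1 / h) * q"
  using assms by (simp add: algebra_simps abs_le_iff)

lemma ln_confidence_nonneg:
  fixes c \<delta> :: real
  assumes "1 \<le> c" "0 < \<delta>" "\<delta> < 1"
  shows "0 \<le> ln (12 * c / \<delta>)"
proof -
  have "1 \<le> 12 * c / \<delta>" using assms by (simp add: field_simps)
  then show ?thesis by simp
qed

theorem lemma16:
  fixes P :: "'s::finite \<Rightarrow> 'a::finite \<Rightarrow> 's pmf"
    and D :: "('s \<times> 'a \<times> 's) list"
    and \<Phi> \<delta> :: real and H :: nat
  assumes "0 < \<delta>" "\<delta> < 1"
    and "\<Phi> \<ge> 6 * real H ^ 2 * ln (12 * real CARD('s)^2 * real CARD('a) / \<delta>)"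
    and "H \<ge> 2"
    and "event_EP P D \<Phi> \<delta>"
  shows "\<forall>s a s'. (1 - 1 / real H) * Phat_dag D \<Phi> s a s' \<le> Pdag P D \<Phi> s a s'
                 \<and> Pdag P D \<Phi> s a s' \<le> (1 + 1 / real H) * Phat_dag D \<Phi> s a s'"
proof (intro allI)
  fix s a s'
  define L where "L = ln (12 * real CARD('s)^2 * real CARD('a) / \<delta>)"
  have "1 \<le> real CARD('s)^2 * real CARD('a)"
    using mult_mono[of 1 "real CARD('s)^2" 1 "real CARD('a)"] by simp
  then have "0 \<le> L"
    unfolding L_def mult.assoc using assms(1,2) by (rule ln_confidence_nonneg)
  show "(1 - 1 / real H) * Phat_dag D \<Phi> s a s' \<le> Pdag P D \<Phi> s a s'
          \<and> Pdag P D \<Phi> s a s' \<le> (1 + 1 / real H) * Phat_dag D \<Phi> s a s'"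
  proof (cases "\<Phi> \<le> real (cnt3 D s a s')")
    case False
    then show ?thesis by (simp add: Pdag_def Phat_dag_def)
  next
    case True
    have "\<bar>Phat_dag D \<Phi> s a s' - Pdag P D \<Phi> s a s'\<bar>
        \<le> sqrt (2 * Phat_dag D \<Phi> s a s' / real (cnt2 D s a) * L)
          + 14 / (3 * real (cnt2 D s a)) * L"
      using assms(5) True unfolding event_EP_def L_def by blast
    also have "\<dots> \<le> Phat_dag D \<Phi> s a s' / real H"
      unfolding Phat_dag_def using True assms(3,4) \<open>0 \<le> L\<close>
      by (simp only: if_True) (intro bernstein_width_le_empirical_div; simp add: L_def)
    finally show ?thesis by (rule relative_bounds_of_abs_diff_le)
  qed
qed

end
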